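(* On every interface element $T$ on which the IFE shape functions are unisolvent, for all $X\in T$, all choices $\overline X_i\in l$, $s=\pm$ ($s'$ opposite), and $j,k=1,2$: $$\sum_{i\in\mathcal I}(A_i-X)^T\otimes\Phi^s_i(X)+\sum_{i\in\mathcal I^{s'}}\big((A_i-\overline X_i)^T\otimes\Phi^s_i(X)\big)(\overline M^s-I_4)=0_{2\times4},$$ $$\sum_{i\in\mathcal I}(A_i-X)^T\otimes\partial_{x_j}\Phi^s_i(X)+\sum_{i\in\mathcal I^{s'}}\big((A_i-\overline X_i)^T\otimes\partial_{x_j}\Phi^s_i(X)\big)(\overline M^s-I_4)=I^j,$$ $$\sum_{i\in\mathcal I}(A_i-X)^T\otimes\partial_{x_jx_k}\Phi^s_i(X)+\sum_{i\in\mathcal I^{s'}}\big((A_i-\overline X_i)^T\otimes\partial_{x_jx_k}\Phi^s_i(X)\big)(\overline M^s-I_4)=0_{2\times4},$$ where $I^1=[I_2,0_{2\times2}]$ and $I^2=[0_{2\times2},I_2]$.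
   Context: Lamé parameters $\lambda^\pm,\mu^\pm>0$; stress $\sigma^s(\mathbf v)=\lambda^s(\nabla\cdot\mathbf v)I+2\mu^s\epsilon(\mathbf v)$. $T$ is a triangle with $\Pi_T=[\mathrm{span}\{1,x,y\}]^2$ and nodes its vertices, or a square with $\Pi_T=[\mathrm{span}\{1,x,y,xy\}]^2$ and nodes its vertices, or a square with $\Pi_T=[\mathrm{span}\{1,x,y,x^2-y^2\}]^2$ and nodes its edge midpoints; $\mathcal I$ the node index set. $\Gamma$ meets $\partial T$ at $D,E$; $l$ is the line through them with unit normal $\bar{\mathbf n}=(\bar n_1,\bar n_2)$; $l$ splits $T$ into $\overline T^\pm$; $\mathcal I^s=\{i:A_i\in T\cap\Omega^s\}$. IFE shape functions $\boldsymbol\phi_{i,T}$ ($1\le i\le2|\mathcal I|$) are the piecewise functions $\boldsymbol\phi^s\in\Pi_T$ on $\overline T^s$, continuous across $l$, with (square cases) equal coefficient vectors of $xy$ (resp. $x^2-y^2$), satisfying $\sigma^+(\boldsymbol\phi^+)(F)\bar{\mathbf n}=\sigma^-(\boldsymbol\phi^-)(F)\bar{\mathbf n}$ at a fixed $F\in l$, with $\boldsymbol\phi_{i,T}(A_j)=(\delta_{ij},0)^T$ ($i\le|\mathcal I|$), $(0,\delta_{i-|\mathcal I|,j})^T$ ($i>|\mathcal I|$); unisolvent means nodal values determine IFE functions uniquely. $\Phi_{i,T}=[\boldsymbol\phi_{i,T},\boldsymbol\phi_{i+|\mathcal I|,T}]$, and $\Phi^s_i$ is the $2\times2$ matrix polynomial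 equal to $\Phi_{i,T}$ on $\overline T^s$. $\overline N^s$ is the $4\times4$ matrix with rows $((\lambda^s+2\mu^s)\bar n_1,\mu^s\bar n_2,\mu^s\bar n_2,\lambda^s\bar n_1)$, $(\lambda^s\bar n_2,\mu^s\bar n_1,\mu^s\bar n_1,(\lambda^s+2\mu^s)\bar n_2)$, $(-\bar n_2,0,\bar n_1,0)$, $(0,-\bar n_2,0,\bar n_1)$; $\overline M^-=(\overline N^+)^{-1}\overline N^-$, $\overline M^+=(\overline N^-)^{-1}\overline N^+$. $\otimes$ is the Kronecker product. *)

theory Defs
  imports "HOL-Analysis.Analysis"
begin

(* Kind of element: triangle with P1; square with bilinear Q1 (vertex nodes);
   square with rotated Q1 (edge-midpoint nodes). *)
datatype elem_kind = Tri | BilinSq | RotSq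

definition nnodes :: "elem_kind \<Rightarrow> nat" where
  "nnodes K = (if K = Tri then 3 else 4)"

definition pbasis :: "elem_kind \<Rightarrow> nat \<Rightarrow> real^2 \<Rightarrow> real" where
  "pbasis K k X =
     (if k = 0 then 1 else if k = 1 then X$1 else if k = 2 then X$2
      else if K = BilinSq then X$1 * X$2 else (X$1)^2 - (X$2)^2)"

definition polyv :: "elem_kind \<Rightarrow> (nat \<Rightarrow> real^2) \<Rightarrow> real^2 \<Rightarrow> real^2" where
  "polyv K c X = (\<Sum>k<nnodes K. pbasis K k X *\<^sub>R c k)"

definition is_element :: "elem_kind \<Rightarrow> (real^2) set \<Rightarrow> (nat \<Rightarrow> real^2) \<Rightarrow> bool" where
  "is_element K T A =
     (inj_on A {..<nnodes K} \<and>
      (if K = Tri then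
         T = convex hull (A ` {..<3}) \<and> \<not> collinear (A ` {..<3})
       else (\<exists>a h. h > 0 \<and> T = cbox a (a + vector [h, h]) \<and>
              A ` {..<4} =
                (if K = BilinSq then
                   {a, a + vector [h, 0], a + vector [h, h], a + vector [0, h]}
                 else
                   {a + vector [h/2, 0], a + vector [h, h/2],
                    a + vector [h/2, h], a + vector [0, h/2]}))))"

definition pd :: "2 \<Rightarrow> (real^2 \<Rightarrow> 'a::real_normed_vector) \<Rightarrow> real^2 \<Rightarrow> 'a" where
  "pd j f X = vector_derivative (\<lambda>t. f (X + t *\<^sub>R axis j 1)) (at 0)"

definition jac :: "(real^2 \<Rightarrow> real^2) \<Rightarrow> real^2 \<Rightarrow> real^2^2" where
  "jac v X = (\<chi> a b. (pd b v X) $ a)"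

definition stress :: "real \<Rightarrow> real \<Rightarrow> (real^2 \<Rightarrow> real^2) \<Rightarrow> real^2 \<Rightarrow> real^2^2" where
  "stress lam mu v X =
     (lam * ((jac v X)$1$1 + (jac v X)$2$2)) *\<^sub>R mat 1
     + mu *\<^sub>R (jac v X + transpose (jac v X))"

definition on_l :: "real^2 \<Rightarrow> real^2 \<Rightarrow> real^2 \<Rightarrow> bool" where
  "on_l D nbar X = ((X - D) \<bullet> nbar = 0)"

(* Lame parameters selected by the sign s (True = +, False = -) *)
definition lame :: "bool \<Rightarrow> real \<Rightarrow> real \<Rightarrow> real" where
  "lame s ap am = (if s then ap else am)"

(* IFE function: pair (v^+, v^-) of functions in Pi_T *)
definition is_ife :: "elem_kind \<Rightarrow> (real^2) set \<Rightarrow> real^2 \<Rightarrow> real^2 \<Rightarrow> real^2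
    \<Rightarrow> real \<Rightarrow> real \<Rightarrow> real \<Rightarrow> real
    \<Rightarrow> (real^2 \<Rightarrow> real^2) \<times> (real^2 \<Rightarrow> real^2) \<Rightarrow> bool" where
  "is_ife K T D nbar F lp mp lm mm v =
     ((\<exists>cp cm. fst v = polyv K cp \<and> snd v = polyv K cm \<and> (K \<noteq> Tri \<longrightarrow> cp 3 = cm 3))
      \<and> (\<forall>Y\<in>T. on_l D nbar Y \<longrightarrow> fst v Y = snd v Y)
      \<and> stress lp mp (fst v) F *v nbar = stress lm mm (snd v) F *v nbar)"

(* T^+ = {X in T. (X - D).nbar >= 0}, T^- = {X in T. (X - D).nbar <= 0};
   value of the piecewise IFE function at a node *)
definition nodal_val :: "real^2 \<Rightarrow> real^2
    \<Rightarrow> (real^2 \<Rightarrow> real^2) \<times> (real^2 \<Rightarrow> real^2) \<Rightarrow> real^2 \<Rightarrow> real^2" where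
  "nodal_val D nbar v P = (if (P - D) \<bullet> nbar \<ge> 0 then fst v P else snd v P)"

definition unisolvent :: "elem_kind \<Rightarrow> (real^2) set \<Rightarrow> (nat \<Rightarrow> real^2) \<Rightarrow> real^2 \<Rightarrow> real^2
    \<Rightarrow> real^2 \<Rightarrow> real \<Rightarrow> real \<Rightarrow> real \<Rightarrow> real \<Rightarrow> bool" where
  "unisolvent K T A D nbar F lp mp lm mm =
     (\<forall>w :: nat \<Rightarrow> real^2. \<exists>!v. is_ife K T D nbar F lp mp lm mm v \<and>
         (\<forall>i<nnodes K. nodal_val D nbar v (A i) = w i))"

(* shape function phi_{k,T}, 0 <= k < 2|I| (0-based) *)
definition shape :: "elem_kind \<Rightarrow> (real^2) set \<Rightarrow> (nat \<Rightarrow> real^2) \<Rightarrow> real^2 \<Rightarrow> real^2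
    \<Rightarrow> real^2 \<Rightarrow> real \<Rightarrow> real \<Rightarrow> real \<Rightarrow> real \<Rightarrow> nat
    \<Rightarrow> (real^2 \<Rightarrow> real^2) \<times> (real^2 \<Rightarrow> real^2)" where
  "shape K T A D nbar F lp mp lm mm k =
     (THE v. is_ife K T D nbar F lp mp lm mm v \<and>
        (\<forall>j<nnodes K. nodal_val D nbar v (A j) =
            (if k < nnodes K then vector [if j = k then 1 else 0, 0]
             else vector [0, if j + nnodes K = k then 1 else 0])))"

(* Phi^s_i(Y) = [phi_i^s(Y), phi_{i+|I|}^s(Y)] as a 2x2 matrix (columns) *)
definition PhiS :: "elem_kind \<Rightarrow> (real^2) set \<Rightarrow> (nat \<Rightarrow> real^2) \<Rightarrow> real^2 \<Rightarrow> real^2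
    \<Rightarrow> real^2 \<Rightarrow> real \<Rightarrow> real \<Rightarrow> real \<Rightarrow> real \<Rightarrow> bool \<Rightarrow> nat \<Rightarrow> real^2 \<Rightarrow> real^2^2" where
  "PhiS K T A D nbar F lp mp lm mm s i Y =
     (let sel = (\<lambda>v. if s then fst v Y else snd v Y);
          c1 = sel (shape K T A D nbar F lp mp lm mm i);
          c2 = sel (shape K T A D nbar F lp mp lm mm (i + nnodes K))
      in transpose (vector [c1, c2]))"

definition Iside :: "elem_kind \<Rightarrow> (nat \<Rightarrow> real^2) \<Rightarrow> real^2 \<Rightarrow> real^2 \<Rightarrow> bool \<Rightarrow> nat set" where
  "Iside K A D nbar s =
     {i. i < nnodes K \<and> (if s then (A i - D) \<bullet> nbar > 0 else (A i - D) \<bullet> nbar < 0)}"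

definition Nbar :: "real \<Rightarrow> real \<Rightarrow> real^2 \<Rightarrow> real^4^4" where
  "Nbar lam mu n = vector [
     vector [(lam + 2*mu) * n$1, mu * n$2, mu * n$2, lam * n$1],
     vector [lam * n$2, mu * n$1, mu * n$1, (lam + 2*mu) * n$2],
     vector [- n$2, 0, n$1, 0],
     vector [0, - n$2, 0, n$1]]"

definition Mbar :: "bool \<Rightarrow> real \<Rightarrow> real \<Rightarrow> real \<Rightarrow> real \<Rightarrow> real^2 \<Rightarrow> real^4^4" where
  "Mbar s lp mp lm mm n =
     matrix_inv (Nbar (lame (\<not> s) lp lm) (lame (\<not> s) mp mm) n)
       ** Nbar (lame s lp lm) (lame s mp mm) n"

(* Kronecker product v^T \<otimes> B of a 1x2 row vector and a 2x2 matrix: [v1 B, v2 B] *)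
definition kron_row :: "real^2 \<Rightarrow> real^2^2 \<Rightarrow> real^4^2" where
  "kron_row v B = vector [
     vector [v$1 * B$1$1, v$1 * B$1$2, v$2 * B$1$1, v$2 * B$1$2],
     vector [v$1 * B$2$1, v$1 * B$2$2, v$2 * B$2$1, v$2 * B$2$2]]"

definition Iblock :: "2 \<Rightarrow> real^4^2" where
  "Iblock j = (if j = 1 then vector [vector [1, 0, 0, 0], vector [0, 1, 0, 0]]
               else vector [vector [0, 0, 1, 0], vector [0, 0, 0, 1]])"

end

theory Submission
  imports Defs
begin

text \<open>For a test vector \<open>w \<in> \<real>\<^sup>4\<close> let \<open>G\<close>, \<open>G'\<close> be the \<open>2\<times>2\<close> matrices with \<open>vec G = w\<close>
  and \<open>vec G' = M\<^sup>s w\<close>. The definition of \<open>M\<^sup>s\<close> says that \<open>N\<^sup>s' vec G' = N\<^sup>s vec G\<close>: the two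
  gradients have the same traction and agree along \<open>l\<close>. Hence the function equal to \<open>G (Y - X)\<close> on
  \<open>T\<^sup>s\<close> and to \<open>G (Y - X) + (G' - G) (Y - D)\<close> on the other side is an IFE function, and by
  unisolvence the shape functions reproduce it from its nodal values. These are \<open>G (A\<^sub>i - X)\<close>,
  plus \<open>(G' - G) (A\<^sub>i - X\<^sub>i)\<close> at the nodes strictly beyond \<open>l\<close> (\<open>X\<^sub>i\<close> may replace \<open>D\<close> since
  \<open>G' - G\<close> vanishes along \<open>l\<close>). Applied to \<open>w\<close>, this says that the left-hand side of the first
  identity, taken at an arbitrary point \<open>Y\<close> instead of \<open>X\<close>, equals \<open>(Y - X)\<^sup>T \<otimes> I\<^sub>2\<close>. Everything
  is a polynomial of degree at most two, so differentiating this identity once and twice and setting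
  \<open>Y = X\<close> gives the three claims.\<close>

lemma vector_4 [simp]:
  "(vector [a, b, c, d] :: 'a::zero^4)$1 = a"
  "(vector [a, b, c, d] :: 'a::zero^4)$2 = b"
  "(vector [a, b, c, d] :: 'a::zero^4)$3 = c"
  "(vector [a, b, c, d] :: 'a::zero^4)$4 = d"
  unfolding vector_def by simp_all

lemma pd_eq_has_derivative:
  assumes "(f has_derivative f') (at X)"
  shows "pd j f X = f' (axis j 1)"
proof -
  have "((\<lambda>t::real. X + t *\<^sub>R axis j 1) has_derivative (\<lambda>t. t *\<^sub>R axis j 1)) (at 0)"
    by (auto intro!: derivative_eq_intros)
  from diff_chain_at[OF this] assms
  have "((\<lambda>t. f (X + t *\<^sub>R axis j 1)) has_derivative (\<lambda>t. f' (t *\<^sub>R axis j 1))) (at 0)"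
    by (simp add: o_def)
  moreover have "f' (t *\<^sub>R axis j 1) = t *\<^sub>R f' (axis j 1)" for t
    using assms by (simp add: has_derivative_bounded_linear linear_simps)
  ultimately have "((\<lambda>t. f (X + t *\<^sub>R axis j 1)) has_vector_derivative f' (axis j 1)) (at 0)"
    by (simp add: has_vector_derivative_def)
  then show ?thesis
    unfolding pd_def by (rule vector_derivative_at)
qed

lemma pd_const: "pd j (\<lambda>Y. c) X = 0"
  using pd_eq_has_derivative[of "\<lambda>Y. c" "\<lambda>h. 0"] by simp

lemma pd_linear_image:
  assumes "f differentiable (at X)" and "bounded_linear L"
  shows "pd j (\<lambda>Y. L (f Y)) X = L (pd j f X)"
proof -
  obtain f' where f': "(f has_derivative f') (at X)"
    using assms(1) differentiable_def by blast
  show ?thesis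
    using pd_eq_has_derivative[OF bounded_linear.has_derivative[OF assms(2) f']]
      pd_eq_has_derivative[OF f'] by simp
qed

lemma pd_add:
  assumes "f differentiable (at X)" and "g differentiable (at X)"
  shows "pd j (\<lambda>Y. f Y + g Y) X = pd j f X + pd j g X"
proof -
  obtain f' g' where f': "(f has_derivative f') (at X)" and g': "(g has_derivative g') (at X)"
    using assms differentiable_def by blast
  show ?thesis
    using pd_eq_has_derivative[OF has_derivative_add[OF f' g']]
      pd_eq_has_derivative[OF f'] pd_eq_has_derivative[OF g'] by simp
qed

lemma pd_sum:
  assumes "finite S" and "\<And>i. i \<in> S \<Longrightarrow> f i differentiable (at X)"
  shows "pd j (\<lambda>Y. \<Sum>i\<in>S. f i Y) X = (\<Sum>i\<in>S. pd j (f i) X)"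
  using assms
proof (induction S rule: finite_induct)
  case empty
  then show ?case by (simp add: pd_const)
next
  case (insert x S)
  then have "(\<lambda>Y. \<Sum>i\<in>S. f i Y) differentiable (at X)"
    by (auto intro!: differentiable_sum)
  with insert show ?case
    by (simp add: pd_add)
qed

definition quad_poly :: "'a \<Rightarrow> 'a \<Rightarrow> 'a \<Rightarrow> 'a \<Rightarrow> 'a \<Rightarrow> 'a \<Rightarrow> real^2 \<Rightarrow> 'a::real_vector" where
  "quad_poly c0 c1 c2 c3 c4 c5 Y = c0 + Y$1 *\<^sub>R c1 + Y$2 *\<^sub>R c2
      + (Y$1 * Y$1) *\<^sub>R c3 + (Y$1 * Y$2) *\<^sub>R c4 + (Y$2 * Y$2) *\<^sub>R c5"

definition quadratic :: "(real^2 \<Rightarrow> 'a::real_normed_vector) \<Rightarrow> bool" where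
  "quadratic f \<longleftrightarrow> (\<exists>c0 c1 c2 c3 c4 c5. f = quad_poly c0 c1 c2 c3 c4 c5)"

lemma quadraticE:
  assumes "quadratic f"
  obtains c0 c1 c2 c3 c4 c5 where "f = quad_poly c0 c1 c2 c3 c4 c5"
  using assms unfolding quadratic_def by blast

lemma quadratic_quad_poly [intro]: "quadratic (quad_poly c0 c1 c2 c3 c4 c5)"
  unfolding quadratic_def by blast

lemma has_derivative_quad_poly:
  fixes X :: "real^2"
  shows "(quad_poly c0 c1 c2 c3 c4 c5 has_derivative (\<lambda>h. h$1 *\<^sub>R c1 + h$2 *\<^sub>R c2
      + (2 * X$1 * h$1) *\<^sub>R c3 + (h$1 * X$2 + X$1 * h$2) *\<^sub>R c4 + (2 * X$2 * h$2) *\<^sub>R c5)) (at X)"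
proof -
  have nth: "((\<lambda>x. x $ i) has_derivative (\<lambda>h. h $ i)) (at X)" for i :: 2
    by (rule bounded_linear_imp_has_derivative[OF bounded_linear_vec_nth])
  show ?thesis
    unfolding quad_poly_def[abs_def]
    by (auto intro!: derivative_eq_intros nth ext simp: algebra_simps)
qed

lemma quadratic_differentiable: "quadratic f \<Longrightarrow> f differentiable (at X)"
  unfolding differentiable_def by (elim quadraticE) (use has_derivative_quad_poly in blast)

lemma quadratic_pd:
  assumes "quadratic f"
  shows "quadratic (pd j f)"
proof -
  obtain c0 c1 c2 c3 c4 c5 where f: "f = quad_poly c0 c1 c2 c3 c4 c5"
    using assms by (rule quadraticE)
  define e where "e = (axis j 1 :: real^2)"
  have "pd j f = quad_poly (e$1 *\<^sub>R c1 + e$2 *\<^sub>R c2) ((2 * e$1) *\<^sub>R c3 + e$2 *\<^sub>R c4)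
      (e$1 *\<^sub>R c4 + (2 * e$2) *\<^sub>R c5) 0 0 0"
    by (rule ext) (simp add: f e_def pd_eq_has_derivative[OF has_derivative_quad_poly]
        quad_poly_def algebra_simps)
  then show ?thesis
    by auto
qed

lemma quadratic_linear_image:
  assumes "bounded_linear L" and "quadratic f"
  shows "quadratic (\<lambda>Y. L (f Y))"
proof -
  obtain c0 c1 c2 c3 c4 c5 where "f = quad_poly c0 c1 c2 c3 c4 c5"
    using assms(2) by (rule quadraticE)
  then have "(\<lambda>Y. L (f Y)) = quad_poly (L c0) (L c1) (L c2) (L c3) (L c4) (L c5)"
    using assms(1) by (simp add: quad_poly_def fun_eq_iff linear_simps)
  then show ?thesis
    by auto
qed

lemma quadratic_add:
  assumes "quadratic f" and "quadratic g"
  shows "quadratic (\<lambda>Y. f Y + g Y)"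
proof -
  obtain c0 c1 c2 c3 c4 c5 d0 d1 d2 d3 d4 d5
    where "f = quad_poly c0 c1 c2 c3 c4 c5" "g = quad_poly d0 d1 d2 d3 d4 d5"
    using assms by (metis quadraticE)
  then have "(\<lambda>Y. f Y + g Y) = quad_poly (c0 + d0) (c1 + d1) (c2 + d2) (c3 + d3) (c4 + d4) (c5 + d5)"
    by (simp add: quad_poly_def fun_eq_iff algebra_simps)
  then show ?thesis
    by auto
qed

lemma quadratic_const: "quadratic (\<lambda>Y. c)"
proof -
  have "(\<lambda>Y. c) = quad_poly c 0 0 0 0 0"
    by (simp add: quad_poly_def fun_eq_iff)
  then show ?thesis
    by auto
qed

lemma quadratic_sum:
  "finite S \<Longrightarrow> (\<And>i. i \<in> S \<Longrightarrow> quadratic (f i)) \<Longrightarrow> quadratic (\<lambda>Y. \<Sum>i\<in>S. f i Y)"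
  by (induction S rule: finite_induct) (auto intro: quadratic_add quadratic_const)

lemma quadratic_pbasis: "quadratic (pbasis K k)"
proof -
  let ?sq = "k > 2 \<and> K \<noteq> BilinSq"
  have "pbasis K k = quad_poly (if k = 0 then 1 else 0) (if k = 1 then 1 else 0)
      (if k = 2 then 1 else 0) (if ?sq then 1 else 0) (if k > 2 \<and> K = BilinSq then 1 else 0)
      (if ?sq then -1 else 0)"
    by (simp add: pbasis_def quad_poly_def fun_eq_iff power2_eq_square)
  then show ?thesis
    by auto
qed

lemma quadratic_polyv: "quadratic (polyv K c)"
  unfolding polyv_def[abs_def]
  by (rule quadratic_sum) (auto intro: quadratic_linear_image[OF bounded_linear_scaleR_left] quadratic_pbasis)

lemma quadratic_transpose_vector:
  assumes "quadratic p" and "quadratic q"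
  shows "quadratic (\<lambda>Y. transpose (vector [p Y, q Y]) :: real^2^2)"
proof -
  obtain c0 c1 c2 c3 c4 c5 d0 d1 d2 d3 d4 d5
    where "p = quad_poly c0 c1 c2 c3 c4 c5" "q = quad_poly d0 d1 d2 d3 d4 d5"
    using assms by (metis quadraticE)
  moreover define t where "t a b = (transpose (vector [a, b]) :: real^2^2)" for a b
  ultimately have "(\<lambda>Y. t (p Y) (q Y))
      = quad_poly (t c0 d0) (t c1 d1) (t c2 d2) (t c3 d3) (t c4 d4) (t c5 d5)"
    by (simp add: quad_poly_def fun_eq_iff vec_eq_iff forall_2 transpose_def)
  then show ?thesis
    unfolding t_def by auto
qed

definition rot90 :: "real^2 \<Rightarrow> real^2" where
  "rot90 n = vector [- n$2, n$1]"

lemma norm_eq_1_vec2: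
  fixes n :: "real^2"
  assumes "norm n = 1"
  shows "n$1 * n$1 + n$2 * n$2 = 1"
  using assms by (simp add: norm_eq_1 inner_vec_def sum_2)

lemma orthonormal_decomposition_vec2:
  fixes u n :: "real^2"
  assumes "norm n = 1"
  shows "u = (u \<bullet> n) *\<^sub>R n + (u \<bullet> rot90 n) *\<^sub>R rot90 n"
  using norm_eq_1_vec2[OF assms]
  unfolding vec_eq_iff forall_2
  by (simp add: inner_vec_def sum_2 rot90_def) (intro conjI; algebra)

definition vec_of_mat :: "real^2^2 \<Rightarrow> real^4" where
  "vec_of_mat G = vector [G$1$1, G$2$1, G$1$2, G$2$2]"

definition mat_of_vec :: "real^4 \<Rightarrow> real^2^2" where
  "mat_of_vec w = vector [vector [w$1, w$3], vector [w$2, w$4]]"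

lemma vec_of_mat_of_vec [simp]: "vec_of_mat (mat_of_vec w) = w"
  by (simp add: vec_of_mat_def mat_of_vec_def vec_eq_iff forall_4)

lemma vec_of_mat_0 [simp]: "vec_of_mat 0 = 0"
  by (simp add: vec_of_mat_def vec_eq_iff forall_4)

lemma mat_of_vec_diff: "mat_of_vec (v - w) = mat_of_vec v - mat_of_vec w"
  by (simp add: mat_of_vec_def vec_eq_iff forall_2)

text \<open>The first two rows of \<open>Nbar\<close> give the traction \<open>\<sigma> n\<close> of the gradient \<open>G\<close>,
  the last two its tangential derivative \<open>G t\<close>, where \<open>t\<close> is \<open>n\<close> rotated by 90 degrees.\<close>

lemma Nbar_vec_of_mat:
  "(Nbar lam mu n *v vec_of_mat G)$1
     = (lam + 2*mu) * n$1 * G$1$1 + mu * n$2 * G$2$1 + mu * n$2 * G$1$2 + lam * n$1 * G$2$2"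
  "(Nbar lam mu n *v vec_of_mat G)$2
     = lam * n$2 * G$1$1 + mu * n$1 * G$2$1 + mu * n$1 * G$1$2 + (lam + 2*mu) * n$2 * G$2$2"
  "(Nbar lam mu n *v vec_of_mat G)$3 = G$1 \<bullet> rot90 n"
  "(Nbar lam mu n *v vec_of_mat G)$4 = G$2 \<bullet> rot90 n"
  by (simp_all add: Nbar_def vec_of_mat_def rot90_def matrix_vector_mult_def inner_vec_def
      sum_2 sum_4 algebra_simps)

lemma Nbar_invertible:
  assumes "lam > 0" and "mu > 0" and n: "norm n = 1"
  shows "invertible (Nbar lam mu n)"
  unfolding invertible_left_inverse matrix_left_invertible_ker
proof (intro allI impI)
  fix x :: "real^4"
  assume x: "Nbar lam mu n *v x = 0"
  define G where "G = mat_of_vec x"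
  have N0: "(Nbar lam mu n *v vec_of_mat G)$k = 0" for k
    using x by (simp add: G_def)
  define a where "a = (\<chi> i. G$i \<bullet> n)"
  have "G$i \<bullet> rot90 n = 0" for i
    using N0[of 3] N0[of 4] exhaust_2[of i] by (auto simp: Nbar_vec_of_mat)
  then have "G$i = a$i *\<^sub>R n" for i
    using orthonormal_decomposition_vec2[OF n, of "G$i"] by (simp add: a_def)
  then have Ga: "G$i$k = a$i * n$k" for i k
    by simp
  define p where "p = a$1 * n$1 + a$2 * n$2"
  have nn: "n$1 * n$1 + n$2 * n$2 = 1"
    using norm_eq_1_vec2[OF n] .
  have f1: "mu * a$1 + (lam + mu) * p * n$1 = 0"
    using N0[of 1] nn unfolding Nbar_vec_of_mat Ga p_def by algebra
  have f2: "mu * a$2 + (lam + mu) * p * n$2 = 0"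
    using N0[of 2] nn unfolding Nbar_vec_of_mat Ga p_def by algebra
  have "(lam + 2 * mu) * p = n$1 * (mu * a$1 + (lam + mu) * p * n$1)
      + n$2 * (mu * a$2 + (lam + mu) * p * n$2)"
    using nn unfolding p_def by algebra
  with f1 f2 assms have "p = 0"
    by simp
  with f1 f2 assms have "a = 0"
    by (simp add: vec_eq_iff forall_2)
  then have "G = 0"
    using Ga by (simp add: vec_eq_iff forall_2)
  then show "x = 0"
    by (metis G_def vec_of_mat_0 vec_of_mat_of_vec)
qed

lemma jac_affine: "jac (\<lambda>Y. G *v Y + b) X = G"
proof -
  have "((\<lambda>Y. G *v Y + b) has_derivative (\<lambda>h. G *v h)) (at X)"
    by (auto intro!: derivative_eq_intros bounded_linear_imp_has_derivative)
  then show ?thesis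
    by (simp add: jac_def pd_eq_has_derivative vec_eq_iff matrix_vector_mult_def sum_2 axis_def forall_2)
qed

lemma jac_add:
  "f differentiable (at X) \<Longrightarrow> g differentiable (at X) \<Longrightarrow>
    jac (\<lambda>Y. f Y + g Y) X = jac f X + jac g X"
  by (simp add: jac_def pd_add vec_eq_iff)

lemma jac_scaleR:
  "f differentiable (at X) \<Longrightarrow> jac (\<lambda>Y. c *\<^sub>R f Y) X = c *\<^sub>R jac f X"
  by (simp add: jac_def pd_linear_image[OF _ bounded_linear_scaleR_right] vec_eq_iff)

lemma stress_add:
  "f differentiable (at X) \<Longrightarrow> g differentiable (at X) \<Longrightarrow>
    stress lam mu (\<lambda>Y. f Y + g Y) X = stress lam mu f X + stress lam mu g X"
  by (simp add: stress_def jac_add transpose_def vec_eq_iff algebra_simps)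

lemma stress_scaleR:
  "f differentiable (at X) \<Longrightarrow> stress lam mu (\<lambda>Y. c *\<^sub>R f Y) X = c *\<^sub>R stress lam mu f X"
  by (simp add: stress_def jac_scaleR transpose_def vec_eq_iff algebra_simps)

lemma stress_affine_traction:
  "stress lam mu (\<lambda>Y. G *v Y + b) X *v n
     = vector [(Nbar lam mu n *v vec_of_mat G)$1, (Nbar lam mu n *v vec_of_mat G)$2]"
  unfolding Nbar_vec_of_mat stress_def jac_affine
  by (simp add: matrix_vector_mult_def sum_2 transpose_def mat_def
      vec_eq_iff forall_2 algebra_simps)

lemma polyv_add: "polyv K (\<lambda>k. c k + d k) Y = polyv K c Y + polyv K d Y"
  by (simp add: polyv_def scaleR_add_right sum.distrib)

lemma polyv_scaleR: "polyv K (\<lambda>k. a *\<^sub>R c k) Y = a *\<^sub>R polyv K c Y"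
  by (simp add: polyv_def scaleR_sum_right mult.commute)

lemma affine_eq_polyv: "\<exists>c. (\<lambda>Y. G *v Y + b) = polyv K c \<and> c 3 = 0"
proof -
  define c :: "nat \<Rightarrow> real^2" where
    "c k = (if k = 0 then b else if k = 1 then column 1 G else if k = 2 then column 2 G else 0)"
    for k
  have "polyv K c Y = G *v Y + b" for Y
  proof -
    have "polyv K c Y = (\<Sum>k<3. pbasis K k Y *\<^sub>R c k)"
      unfolding polyv_def by (rule sum.mono_neutral_right) (auto simp: nnodes_def c_def)
    also have "\<dots> = G *v Y + b"
      by (simp add: numeral_3_eq_3 c_def pbasis_def column_def vec_eq_iff forall_2
          matrix_vector_mult_def sum_2)
    finally show ?thesis .
  qed
  then show ?thesis
    by (intro exI[of _ c]) (auto simp: c_def)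
qed

lemma is_ife_polyv:
  assumes "is_ife K T D n F lp mp lm mm v"
  obtains cp cm where "fst v = polyv K cp" "snd v = polyv K cm" "K \<noteq> Tri \<Longrightarrow> cp 3 = cm 3"
  using assms unfolding is_ife_def by blast

lemma is_ife_differentiable:
  assumes "is_ife K T D n F lp mp lm mm v"
  shows "fst v differentiable (at X)" "snd v differentiable (at X)"
  using assms by (metis is_ife_polyv quadratic_differentiable quadratic_polyv)+

lemma is_ife_add:
  assumes v: "is_ife K T D n F lp mp lm mm v" and w: "is_ife K T D n F lp mp lm mm w"
  shows "is_ife K T D n F lp mp lm mm (\<lambda>Y. fst v Y + fst w Y, \<lambda>Y. snd v Y + snd w Y)"
proof -
  obtain cp cm dp dm where "fst v = polyv K cp" "snd v = polyv K cm" "K \<noteq> Tri \<Longrightarrow> cp 3 = cm 3"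
    "fst w = polyv K dp" "snd w = polyv K dm" "K \<noteq> Tri \<Longrightarrow> dp 3 = dm 3"
    using v w by (metis is_ife_polyv)
  then have "(\<lambda>Y. fst v Y + fst w Y) = polyv K (\<lambda>k. cp k + dp k)"
    "(\<lambda>Y. snd v Y + snd w Y) = polyv K (\<lambda>k. cm k + dm k)"
    "K \<noteq> Tri \<Longrightarrow> cp 3 + dp 3 = cm 3 + dm 3"
    by (simp_all add: polyv_add fun_eq_iff)
  then have "\<exists>cp cm. (\<lambda>Y. fst v Y + fst w Y) = polyv K cp \<and> (\<lambda>Y. snd v Y + snd w Y) = polyv K cm
      \<and> (K \<noteq> Tri \<longrightarrow> cp 3 = cm 3)"
    by blast
  moreover have "stress lp mp (\<lambda>Y. fst v Y + fst w Y) F *v n = stress lm mm (\<lambda>Y. snd v Y + snd w Y) F *v n"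
    using v w unfolding is_ife_def
    by (simp add: stress_add is_ife_differentiable[OF v] is_ife_differentiable[OF w]
        matrix_vector_mult_add_rdistrib)
  ultimately show ?thesis
    using v w unfolding is_ife_def by simp
qed

lemma is_ife_scaleR:
  assumes v: "is_ife K T D n F lp mp lm mm v"
  shows "is_ife K T D n F lp mp lm mm (\<lambda>Y. c *\<^sub>R fst v Y, \<lambda>Y. c *\<^sub>R snd v Y)"
proof -
  obtain cp cm where "fst v = polyv K cp" "snd v = polyv K cm" "K \<noteq> Tri \<Longrightarrow> cp 3 = cm 3"
    using v by (metis is_ife_polyv)
  then have "(\<lambda>Y. c *\<^sub>R fst v Y) = polyv K (\<lambda>k. c *\<^sub>R cp k)"
    "(\<lambda>Y. c *\<^sub>R snd v Y) = polyv K (\<lambda>k. c *\<^sub>R cm k)"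
    "K \<noteq> Tri \<Longrightarrow> c *\<^sub>R cp 3 = c *\<^sub>R cm 3"
    by (simp_all add: polyv_scaleR fun_eq_iff)
  then have "\<exists>cp cm. (\<lambda>Y. c *\<^sub>R fst v Y) = polyv K cp \<and> (\<lambda>Y. c *\<^sub>R snd v Y) = polyv K cm
      \<and> (K \<noteq> Tri \<longrightarrow> cp 3 = cm 3)"
    by blast
  moreover have "stress lp mp (\<lambda>Y. c *\<^sub>R fst v Y) F *v n = stress lm mm (\<lambda>Y. c *\<^sub>R snd v Y) F *v n"
    using v unfolding is_ife_def
    by (simp add: stress_scaleR is_ife_differentiable[OF v] flip: scaleR_matrix_vector_assoc)
  ultimately show ?thesis
    using v unfolding is_ife_def by simp
qed

lemma is_ife_affine:
  assumes "\<forall>Y\<in>T. on_l D n Y \<longrightarrow> G1 *v Y + b1 = G2 *v Y + b2"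
    and "Nbar lp mp n *v vec_of_mat G1 = Nbar lm mm n *v vec_of_mat G2"
  shows "is_ife K T D n F lp mp lm mm (\<lambda>Y. G1 *v Y + b1, \<lambda>Y. G2 *v Y + b2)"
proof -
  obtain c d where c: "(\<lambda>Y. G1 *v Y + b1) = polyv K c" "c 3 = 0"
    and d: "(\<lambda>Y. G2 *v Y + b2) = polyv K d" "d 3 = 0"
    using affine_eq_polyv by metis
  have "\<exists>cp cm. (\<lambda>Y. G1 *v Y + b1) = polyv K cp \<and> (\<lambda>Y. G2 *v Y + b2) = polyv K cm
      \<and> (K \<noteq> Tri \<longrightarrow> cp 3 = cm 3)"
    by (rule exI[of _ c], rule exI[of _ d]) (simp add: c d)
  with assms show ?thesis
    unfolding is_ife_def by (simp add: stress_affine_traction)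
qed

lemma is_ife_zero: "is_ife K T D n F lp mp lm mm (\<lambda>Y. 0, \<lambda>Y. 0)"
proof -
  have "is_ife K T D n F lp mp lm mm (\<lambda>Y. 0 *v Y + 0, \<lambda>Y. 0 *v Y + 0)"
    by (rule is_ife_affine) simp_all
  then show ?thesis
    by simp
qed

lemma is_ife_sum:
  assumes "finite S" and "\<And>i. i \<in> S \<Longrightarrow> is_ife K T D n F lp mp lm mm (v i)"
  shows "is_ife K T D n F lp mp lm mm (\<lambda>Y. \<Sum>i\<in>S. fst (v i) Y, \<lambda>Y. \<Sum>i\<in>S. snd (v i) Y)"
  using assms
proof (induction S rule: finite_induct)
  case empty
  then show ?case
    by (simp add: is_ife_zero)
next
  case (insert x S)
  then show ?case
    using is_ife_add[OF insert.prems[of x] insert.IH] by simp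
qed

lemma matrix_inv_right: "invertible A \<Longrightarrow> A ** matrix_inv A = mat 1"
  unfolding invertible_def matrix_inv_def by (rule someI_ex[THEN conjunct1])

lemma Nbar_mult_Mbar:
  assumes "lp > 0" "mp > 0" "lm > 0" "mm > 0" and "norm n = 1"
  shows "Nbar (lame (\<not> s) lp lm) (lame (\<not> s) mp mm) n *v (Mbar s lp mp lm mm n *v w)
    = Nbar (lame s lp lm) (lame s mp mm) n *v w"
proof -
  have "invertible (Nbar (lame (\<not> s) lp lm) (lame (\<not> s) mp mm) n)"
    by (rule Nbar_invertible) (use assms in \<open>simp_all add: lame_def\<close>)
  then show ?thesis
    by (simp add: Mbar_def matrix_vector_mul_assoc matrix_mul_assoc matrix_inv_right)
qed

lemma jump_vanishes_on_tangents:
  assumes jump: "Nbar l1 m1 n *v vec_of_mat G' = Nbar l2 m2 n *v vec_of_mat G"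
    and n: "norm n = 1" and u: "u \<bullet> n = 0"
  shows "(G' - G) *v u = 0"
proof -
  have "(G' - G)$i \<bullet> rot90 n = 0" for i
    using arg_cong[OF jump, of "\<lambda>y. y$3"] arg_cong[OF jump, of "\<lambda>y. y$4"] exhaust_2[of i]
    by (auto simp: Nbar_vec_of_mat inner_diff_left)
  moreover have "u = (u \<bullet> rot90 n) *\<^sub>R rot90 n"
    using orthonormal_decomposition_vec2[OF n, of u] u by simp
  ultimately show ?thesis
    by (metis inner_commute inner_scaleR_right matrix_vector_mul_component mult_zero_right
        vec_eq_iff zero_index)
qed

definition piece :: "bool \<Rightarrow> 'a \<times> 'a \<Rightarrow> 'a" where
  "piece s v = (if s then fst v else snd v)"

definition ife_pair :: "bool \<Rightarrow> 'a \<Rightarrow> 'a \<Rightarrow> 'a \<times> 'a" where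
  "ife_pair s f g = (if s then (f, g) else (g, f))"

lemma piece_ife_pair [simp]:
  "piece s (ife_pair s f g) = f" "piece (\<not> s) (ife_pair s f g) = g"
  by (simp_all add: piece_def ife_pair_def)

lemma kinked_affine_is_ife:
  assumes jump: "Nbar (lame (\<not> s) lp lm) (lame (\<not> s) mp mm) n *v vec_of_mat G'
      = Nbar (lame s lp lm) (lame s mp mm) n *v vec_of_mat G"
    and n: "norm n = 1"
  shows "is_ife K T D n F lp mp lm mm
    (ife_pair s (\<lambda>Y. G *v (Y - X)) (\<lambda>Y. G *v (Y - X) + (G' - G) *v (Y - D)))"
proof -
  define b where "b = - (G *v X)"
  define b' where "b' = b - (G' - G) *v D"
  have affine: "(\<lambda>Y. G *v (Y - X)) = (\<lambda>Y. G *v Y + b)"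
    "(\<lambda>Y. G *v (Y - X) + (G' - G) *v (Y - D)) = (\<lambda>Y. G' *v Y + b')"
    by (simp_all add: b_def b'_def fun_eq_iff algebra_simps)
  have cont: "\<forall>Y\<in>T. on_l D n Y \<longrightarrow> G *v Y + b = G' *v Y + b'"
  proof (intro ballI impI)
    fix Y
    assume "on_l D n Y"
    then have "(G' - G) *v (Y - D) = 0"
      using jump_vanishes_on_tangents[OF jump n] by (simp add: on_l_def)
    moreover have "G' *v Y + b' = G *v Y + b + (G' - G) *v (Y - D)"
      by (simp add: b'_def algebra_simps)
    ultimately show "G *v Y + b = G' *v Y + b'"
      by simp
  qed
  show ?thesis
  proof (cases s)
    case True
    with jump show ?thesis
      unfolding affine ife_pair_def by (simp add: lame_def is_ife_affine[OF cont])
  next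
    case False
    with jump cont show ?thesis
      unfolding affine ife_pair_def by (simp add: lame_def is_ife_affine)
  qed
qed

lemma nodal_val_piece:
  assumes "i < nnodes K" and "on_l D n (A i) \<Longrightarrow> fst v (A i) = snd v (A i)"
  shows "nodal_val D n v (A i)
    = (if i \<in> Iside K A D n (\<not> s) then piece (\<not> s) v (A i) else piece s v (A i))"
  using assms by (cases s) (auto simp: nodal_val_def Iside_def piece_def on_l_def)

lemma nodal_val_kinked:
  assumes "i < nnodes K" and J: "\<And>P. on_l D n P \<Longrightarrow> J *v (P - D) = 0"
    and Xb: "\<And>i. on_l D n (Xb i)"
  shows "nodal_val D n (ife_pair s f (\<lambda>Y. f Y + J *v (Y - D))) (A i)
    = f (A i) + (if i \<in> Iside K A D n (\<not> s) then J *v (A i - Xb i) else 0)"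
proof -
  have "J *v (A i - D) = J *v (A i - Xb i) + J *v (Xb i - D)"
    by (simp flip: matrix_vector_right_distrib)
  then have "J *v (A i - D) = J *v (A i - Xb i)"
    using J[OF Xb] by simp
  moreover have "on_l D n (A i) \<Longrightarrow> fst (ife_pair s f (\<lambda>Y. f Y + J *v (Y - D))) (A i)
      = snd (ife_pair s f (\<lambda>Y. f Y + J *v (Y - D))) (A i)"
    using J by (simp add: ife_pair_def)
  ultimately show ?thesis
    using nodal_val_piece[OF assms(1), where v = "ife_pair s f (\<lambda>Y. f Y + J *v (Y - D))" and s = s]
    by simp
qed

lemma shape_is_ife:
  assumes "unisolvent K T A D n F lp mp lm mm"
  shows "is_ife K T D n F lp mp lm mm (shape K T A D n F lp mp lm mm k)"
    and "j < nnodes K \<Longrightarrow> nodal_val D n (shape K T A D n F lp mp lm mm k) (A j) =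
      (if k < nnodes K then vector [if j = k then 1 else 0, 0]
       else vector [0, if j + nnodes K = k then 1 else 0])"
proof -
  define w :: "nat \<Rightarrow> real^2" where "w j = (if k < nnodes K then vector [if j = k then 1 else 0, 0]
       else vector [0, if j + nnodes K = k then 1 else 0])" for j
  have "\<exists>!v. is_ife K T D n F lp mp lm mm v \<and> (\<forall>j<nnodes K. nodal_val D n v (A j) = w j)"
    using assms unfolding unisolvent_def by (rule spec)
  then have "is_ife K T D n F lp mp lm mm (shape K T A D n F lp mp lm mm k)
      \<and> (\<forall>j<nnodes K. nodal_val D n (shape K T A D n F lp mp lm mm k) (A j) = w j)"
    unfolding shape_def w_def by (rule theI')
  then show "is_ife K T D n F lp mp lm mm (shape K T A D n F lp mp lm mm k)"
    and "j < nnodes K \<Longrightarrow> nodal_val D n (shape K T A D n F lp mp lm mm k) (A j) =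
      (if k < nnodes K then vector [if j = k then 1 else 0, 0]
       else vector [0, if j + nnodes K = k then 1 else 0])"
    by (simp_all add: w_def)
qed

lemma unisolvent_unique:
  assumes "unisolvent K T A D n F lp mp lm mm"
    and "is_ife K T D n F lp mp lm mm u" and "is_ife K T D n F lp mp lm mm v"
    and "\<And>i. i < nnodes K \<Longrightarrow> nodal_val D n u (A i) = nodal_val D n v (A i)"
  shows "u = v"
proof -
  let ?P = "\<lambda>x. is_ife K T D n F lp mp lm mm x \<and> (\<forall>i<nnodes K. nodal_val D n x (A i) = nodal_val D n v (A i))"
  have "\<exists>!x. ?P x"
    using assms(1) unfolding unisolvent_def by (rule spec)
  moreover have "?P u" "?P v"
    using assms(2-4) by simp_all
  ultimately show ?thesis
    by (metis the1_equality)
qed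

lemma PhiS_eq:
  "PhiS K T A D n F lp mp lm mm s i = (\<lambda>Y. transpose (vector
     [piece s (shape K T A D n F lp mp lm mm i) Y,
      piece s (shape K T A D n F lp mp lm mm (i + nnodes K)) Y]))"
  by (simp add: PhiS_def piece_def fun_eq_iff)

lemma PhiS_mult_vec:
  "PhiS K T A D n F lp mp lm mm s i Y *v x
     = x$1 *\<^sub>R piece s (shape K T A D n F lp mp lm mm i) Y
       + x$2 *\<^sub>R piece s (shape K T A D n F lp mp lm mm (i + nnodes K)) Y"
  by (simp add: PhiS_eq vec_eq_iff forall_2 matrix_vector_mult_def sum_2 transpose_def
      algebra_simps)

lemma quadratic_PhiS:
  assumes "unisolvent K T A D n F lp mp lm mm"
  shows "quadratic (PhiS K T A D n F lp mp lm mm s i)"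
proof -
  have "quadratic (piece s (shape K T A D n F lp mp lm mm k))" for k
    using shape_is_ife(1)[OF assms, of k]
    by (metis is_ife_polyv piece_def quadratic_polyv)
  then show ?thesis
    unfolding PhiS_eq by (intro quadratic_transpose_vector)
qed

lemma ife_shape_expansion:
  assumes unis: "unisolvent K T A D n F lp mp lm mm" and v: "is_ife K T D n F lp mp lm mm v"
  shows "piece s v Y = (\<Sum>i<nnodes K. PhiS K T A D n F lp mp lm mm s i Y *v nodal_val D n v (A i))"
proof -
  let ?\<phi> = "shape K T A D n F lp mp lm mm" and ?m = "nnodes K"
  define w where "w i = nodal_val D n v (A i)" for i
  define u where "u = (\<lambda>Y. \<Sum>i<?m. (w i)$1 *\<^sub>R fst (?\<phi> i) Y + (w i)$2 *\<^sub>R fst (?\<phi> (i + ?m)) Y,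
                       \<lambda>Y. \<Sum>i<?m. (w i)$1 *\<^sub>R snd (?\<phi> i) Y + (w i)$2 *\<^sub>R snd (?\<phi> (i + ?m)) Y)"
  have "is_ife K T D n F lp mp lm mm u"
    unfolding u_def
    using is_ife_sum[OF finite_lessThan, of ?m K T D n F lp mp lm mm
        "\<lambda>i. (\<lambda>Y. (w i)$1 *\<^sub>R fst (?\<phi> i) Y + (w i)$2 *\<^sub>R fst (?\<phi> (i + ?m)) Y,
              \<lambda>Y. (w i)$1 *\<^sub>R snd (?\<phi> i) Y + (w i)$2 *\<^sub>R snd (?\<phi> (i + ?m)) Y)"]
      is_ife_add[OF is_ife_scaleR is_ife_scaleR, OF shape_is_ife(1)[OF unis] shape_is_ife(1)[OF unis]]
    by simp
  moreover have "nodal_val D n u (A j) = nodal_val D n v (A j)" if "j < ?m" for j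
  proof -
    have "nodal_val D n u (A j) = (\<Sum>i<?m. (w i)$1 *\<^sub>R nodal_val D n (?\<phi> i) (A j)
        + (w i)$2 *\<^sub>R nodal_val D n (?\<phi> (i + ?m)) (A j))"
      by (simp add: u_def nodal_val_def)
    also have "\<dots> = (\<Sum>i<?m. if i = j then w i else 0)"
      using that by (intro sum.cong) (auto simp: shape_is_ife(2)[OF unis] vec_eq_iff forall_2)
    finally show ?thesis
      using that by (simp add: w_def)
  qed
  ultimately have "u = v"
    using unisolvent_unique[OF unis _ v] by blast
  then have "piece s v Y = piece s u Y"
    by simp
  also have "\<dots> = (\<Sum>i<?m. PhiS K T A D n F lp mp lm mm s i Y *v w i)"
    by (cases s) (simp_all add: u_def piece_def PhiS_mult_vec)
  finally show ?thesis
    by (simp add: w_def)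
qed

lemma sum_matrix_vector_mult: "(\<Sum>i\<in>S. f i) *v (w :: real^'n) = (\<Sum>i\<in>S. f i *v w)"
  by (induction S rule: infinite_finite_induct) (simp_all add: matrix_vector_mult_add_rdistrib)

lemma kron_row_mult_vec: "kron_row v B *v w = B *v (mat_of_vec w *v v)"
  by (simp add: kron_row_def mat_of_vec_def vec_eq_iff forall_2 matrix_vector_mult_def
      sum_2 sum_4 algebra_simps)

lemma kron_row_zero [simp]: "kron_row 0 B = 0"
  by (simp add: kron_row_def vec_eq_iff forall_2 forall_4)

lemma bounded_linear_kron_row_left: "bounded_linear (\<lambda>v. kron_row v B)"
  unfolding linear_conv_bounded_linear[symmetric]
  by (rule linearI) (simp_all add: kron_row_def vec_eq_iff forall_2 forall_4 algebra_simps)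

lemma bounded_linear_kron_row_right: "bounded_linear (\<lambda>B. kron_row v B)"
  unfolding linear_conv_bounded_linear[symmetric]
  by (rule linearI) (simp_all add: kron_row_def vec_eq_iff forall_2 forall_4 algebra_simps)

lemma bounded_linear_kron_row_mult:
  "bounded_linear (\<lambda>B. kron_row v B ** (M :: real^4^4))"
proof -
  have "linear (\<lambda>B::real^4^2. B ** M)"
    by (rule linearI)
      (simp_all add: matrix_matrix_mult_def vec_eq_iff sum.distrib sum_distrib_left algebra_simps)
  then show ?thesis
    using linear_compose[OF bounded_linear.linear[OF bounded_linear_kron_row_right]]
      linear_conv_bounded_linear
    by (auto simp: o_def)
qed

lemma pd_kron_row_identity: "pd j (\<lambda>Y. kron_row (Y - X) (mat 1)) Z = Iblock j"
proof -
  have "((\<lambda>Y. Y - X) has_derivative (\<lambda>h. h)) (at Z)"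
    by (auto intro!: derivative_eq_intros)
  from bounded_linear.has_derivative[OF _ this]
  have "((\<lambda>Y. kron_row (Y - X) (mat 1)) has_derivative (\<lambda>h. kron_row h (mat 1))) (at Z)"
    using bounded_linear_kron_row_left by blast
  then have "pd j (\<lambda>Y. kron_row (Y - X) (mat 1)) Z = kron_row (axis j 1) (mat 1)"
    by (rule pd_eq_has_derivative)
  also have "\<dots> = Iblock j"
    using exhaust_2[of j]
    by (auto simp: kron_row_def Iblock_def vec_eq_iff forall_2 forall_4 axis_def mat_def)
  finally show ?thesis .
qed

text \<open>The common form of the three left-hand sides of the theorem, for \<open>Q\<close> the family \<open>\<Phi>\<^sup>s\<^sub>i\<close>
  or its first or second partial derivatives.\<close>

definition kron_expansion :: "nat \<Rightarrow> nat set \<Rightarrow> (nat \<Rightarrow> real^2) \<Rightarrow> (nat \<Rightarrow> real^2)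
    \<Rightarrow> real^4^4 \<Rightarrow> (nat \<Rightarrow> real^2 \<Rightarrow> real^2^2) \<Rightarrow> real^2 \<Rightarrow> real^4^2" where
  "kron_expansion m I a b M Q Y =
     (\<Sum>i<m. kron_row (a i) (Q i Y)) + (\<Sum>i\<in>I. kron_row (b i) (Q i Y) ** M)"

lemma kron_expansion_mult_vec:
  "kron_expansion m I a b M Q Y *v w
     = (\<Sum>i<m. Q i Y *v (mat_of_vec w *v a i)) + (\<Sum>i\<in>I. Q i Y *v (mat_of_vec (M *v w) *v b i))"
  by (simp add: kron_expansion_def matrix_vector_mult_add_rdistrib sum_matrix_vector_mult kron_row_mult_vec
      matrix_vector_mul_assoc[symmetric])

lemma pd_kron_expansion:
  assumes "finite I" and "\<And>i. quadratic (Q i)"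
  shows "pd j (kron_expansion m I a b M Q) Z = kron_expansion m I a b M (\<lambda>i. pd j (Q i)) Z"
proof -
  have q1: "quadratic (\<lambda>Y. kron_row (a i) (Q i Y))" for i
    by (rule quadratic_linear_image[OF bounded_linear_kron_row_right assms(2)])
  have q2: "quadratic (\<lambda>Y. kron_row (b i) (Q i Y) ** M)" for i
    by (rule quadratic_linear_image[OF bounded_linear_kron_row_mult assms(2)])
  have "pd j (kron_expansion m I a b M Q) Z
      = (\<Sum>i<m. pd j (\<lambda>Y. kron_row (a i) (Q i Y)) Z) + (\<Sum>i\<in>I. pd j (\<lambda>Y. kron_row (b i) (Q i Y) ** M) Z)"
    unfolding kron_expansion_def[abs_def]
    using assms(1) q1 q2
    by (simp add: pd_add pd_sum quadratic_differentiable quadratic_sum)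
  also have "\<dots> = kron_expansion m I a b M (\<lambda>i. pd j (Q i)) Z"
    unfolding kron_expansion_def
    by (simp add: pd_linear_image[OF quadratic_differentiable[OF assms(2)] bounded_linear_kron_row_right]
        pd_linear_image[OF quadratic_differentiable[OF assms(2)] bounded_linear_kron_row_mult])
  finally show ?thesis .
qed

lemma kron_expansion_derivatives:
  assumes fin: "finite I" and quad: "\<And>i. quadratic (Q i)"
    and reproduces: "\<And>Y. kron_expansion m I a b M Q Y = kron_row (Y - X) (mat 1)"
  shows "kron_expansion m I a b M (\<lambda>i. pd j (Q i)) Z = Iblock j"
    and "kron_expansion m I a b M (\<lambda>i. pd k (pd j (Q i))) Z = 0"
proof -
  have identity: "kron_expansion m I a b M Q = (\<lambda>Y. kron_row (Y - X) (mat 1))"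
    by (rule ext) (rule reproduces)
  have gradient: "kron_expansion m I a b M (\<lambda>i. pd j (Q i)) = (\<lambda>Y. Iblock j)"
  proof
    fix Y
    have "kron_expansion m I a b M (\<lambda>i. pd j (Q i)) Y = pd j (kron_expansion m I a b M Q) Y"
      by (rule pd_kron_expansion[OF fin quad, symmetric])
    also have "\<dots> = Iblock j"
      by (simp add: identity pd_kron_row_identity)
    finally show "kron_expansion m I a b M (\<lambda>i. pd j (Q i)) Y = Iblock j" .
  qed
  then show "kron_expansion m I a b M (\<lambda>i. pd j (Q i)) Z = Iblock j"
    by simp
  have "kron_expansion m I a b M (\<lambda>i. pd k (pd j (Q i))) Z
      = pd k (kron_expansion m I a b M (\<lambda>i. pd j (Q i))) Z"
    by (rule pd_kron_expansion[OF fin quadratic_pd[OF quad], symmetric])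
  then show "kron_expansion m I a b M (\<lambda>i. pd k (pd j (Q i))) Z = 0"
    by (simp add: gradient pd_const)
qed

lemma kron_expansion_PhiS:
  assumes unis: "unisolvent K T A D n F lp mp lm mm"
    and pos: "lp > 0" "mp > 0" "lm > 0" "mm > 0" and n: "norm n = 1"
    and Xb: "\<And>i. on_l D n (Xb i)"
  shows "kron_expansion (nnodes K) (Iside K A D n (\<not> s)) (\<lambda>i. A i - X) (\<lambda>i. A i - Xb i)
      (Mbar s lp mp lm mm n - mat 1) (PhiS K T A D n F lp mp lm mm s) Y = kron_row (Y - X) (mat 1)"
proof (rule matrix_eq[THEN iffD2], rule allI)
  fix w :: "real^4"
  let ?\<Phi> = "PhiS K T A D n F lp mp lm mm s" and ?I = "Iside K A D n (\<not> s)" and ?m = "nnodes K"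
  define G where "G = mat_of_vec w"
  define G' where "G' = mat_of_vec (Mbar s lp mp lm mm n *v w)"
  define v where "v = ife_pair s (\<lambda>Y. G *v (Y - X)) (\<lambda>Y. G *v (Y - X) + (G' - G) *v (Y - D))"
  have jump: "Nbar (lame (\<not> s) lp lm) (lame (\<not> s) mp mm) n *v vec_of_mat G'
      = Nbar (lame s lp lm) (lame s mp mm) n *v vec_of_mat G"
    using Nbar_mult_Mbar[OF pos n] by (simp add: G_def G'_def)
  have tangent: "(G' - G) *v (P - D) = 0" if "on_l D n P" for P
    using jump_vanishes_on_tangents[OF jump n] that by (simp add: on_l_def inner_diff_left)
  have nodal: "nodal_val D n v (A i)
      = G *v (A i - X) + (if i \<in> ?I then (G' - G) *v (A i - Xb i) else 0)" if "i < ?m" for i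
    unfolding v_def by (rule nodal_val_kinked[OF that tangent Xb])
  have "kron_expansion ?m ?I (\<lambda>i. A i - X) (\<lambda>i. A i - Xb i) (Mbar s lp mp lm mm n - mat 1) ?\<Phi> Y *v w
      = (\<Sum>i<?m. ?\<Phi> i Y *v (G *v (A i - X))) + (\<Sum>i\<in>?I. ?\<Phi> i Y *v ((G' - G) *v (A i - Xb i)))"
    by (simp add: kron_expansion_mult_vec G_def G'_def mat_of_vec_diff matrix_vector_mult_diff_rdistrib)
  also have "(\<Sum>i\<in>?I. ?\<Phi> i Y *v ((G' - G) *v (A i - Xb i)))
      = (\<Sum>i<?m. if i \<in> ?I then ?\<Phi> i Y *v ((G' - G) *v (A i - Xb i)) else 0)"
    by (rule sum.mono_neutral_cong_left) (auto simp: Iside_def)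
  also have "(\<Sum>i<?m. ?\<Phi> i Y *v (G *v (A i - X))) + \<dots> = (\<Sum>i<?m. ?\<Phi> i Y *v nodal_val D n v (A i))"
    by (simp add: nodal matrix_vector_right_distrib sum.distrib[symmetric] if_distrib cong: if_cong)
  also have "\<dots> = piece s v Y"
    by (rule ife_shape_expansion[OF unis, symmetric])
      (unfold v_def, rule kinked_affine_is_ife[OF jump n])
  also have "\<dots> = kron_row (Y - X) (mat 1) *v w"
    by (simp add: v_def kron_row_mult_vec G_def)
  finally show "kron_expansion ?m ?I (\<lambda>i. A i - X) (\<lambda>i. A i - Xb i) (Mbar s lp mp lm mm n - mat 1) ?\<Phi> Y *v w
      = kron_row (Y - X) (mat 1) *v w" .
qed

text \<open>Only unisolvence, the positivity of the Lame parameters and \<open>norm nbar = 1\<close> enter the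
  proof.\<close>

theorem mainTheorem15:
  fixes K :: elem_kind and T :: "(real^2) set" and A :: "nat \<Rightarrow> real^2"
    and D E F nbar :: "real^2" and lp mp lm mm :: real
  assumes elem: "is_element K T A"
    and lame_pos: "lp > 0" "mp > 0" "lm > 0" "mm > 0"
    and DE: "D \<in> frontier T" "E \<in> frontier T" "D \<noteq> E"
    and nbar: "norm nbar = 1" "(E - D) \<bullet> nbar = 0"
    and F: "on_l D nbar F"
    and unis: "unisolvent K T A D nbar F lp mp lm mm"
  shows "\<forall>X\<in>T. \<forall>Xb :: nat \<Rightarrow> real^2. (\<forall>i. on_l D nbar (Xb i)) \<longrightarrow>
     (\<forall>s j k.
       let Phi = PhiS K T A D nbar F lp mp lm mm s;
           Ms = Mbar s lp mp lm mm nbar - mat 1;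
           I' = Iside K A D nbar (\<not> s)
       in
       (\<Sum>i<nnodes K. kron_row (A i - X) (Phi i X))
         + (\<Sum>i\<in>I'. kron_row (A i - Xb i) (Phi i X) ** Ms) = 0
     \<and> (\<Sum>i<nnodes K. kron_row (A i - X) (pd j (Phi i) X))
         + (\<Sum>i\<in>I'. kron_row (A i - Xb i) (pd j (Phi i) X) ** Ms) = Iblock j
     \<and> (\<Sum>i<nnodes K. kron_row (A i - X) (pd k (pd j (Phi i)) X))
         + (\<Sum>i\<in>I'. kron_row (A i - Xb i) (pd k (pd j (Phi i)) X) ** Ms) = 0)"
proof (intro ballI allI impI)
  fix X and Xb :: "nat \<Rightarrow> real^2" and s j k
  assume Xb: "\<forall>i. on_l D nbar (Xb i)"
  let ?\<Phi> = "PhiS K T A D nbar F lp mp lm mm s"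
  let ?E = "kron_expansion (nnodes K) (Iside K A D nbar (\<not> s)) (\<lambda>i. A i - X) (\<lambda>i. A i - Xb i)
      (Mbar s lp mp lm mm nbar - mat 1)"
  have reproduces: "?E ?\<Phi> Y = kron_row (Y - X) (mat 1)" for Y
    using kron_expansion_PhiS[OF unis lame_pos nbar(1)] Xb by blast
  have "finite (Iside K A D nbar (\<not> s))"
    by (simp add: Iside_def)
  note derivatives = kron_expansion_derivatives[OF this quadratic_PhiS[OF unis] reproduces]
  show "let Phi = ?\<Phi>; Ms = Mbar s lp mp lm mm nbar - mat 1; I' = Iside K A D nbar (\<not> s) in
       (\<Sum>i<nnodes K. kron_row (A i - X) (Phi i X))
         + (\<Sum>i\<in>I'. kron_row (A i - Xb i) (Phi i X) ** Ms) = 0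
     \<and> (\<Sum>i<nnodes K. kron_row (A i - X) (pd j (Phi i) X))
         + (\<Sum>i\<in>I'. kron_row (A i - Xb i) (pd j (Phi i) X) ** Ms) = Iblock j
     \<and> (\<Sum>i<nnodes K. kron_row (A i - X) (pd k (pd j (Phi i)) X))
         + (\<Sum>i\<in>I'. kron_row (A i - Xb i) (pd k (pd j (Phi i)) X) ** Ms) = 0"
    using reproduces[of X] derivatives
    unfolding kron_expansion_def Let_def by simp
qed

end
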